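(* Under the hypotheses and notation of the setting below, for all $i\ge1$ the annulus $\mathcal A_i=\mathcal B_i\setminus\overline{\mathcal B_{i+1}}$ satisfies $$\frac{g_v}{(d-1)^i}\le\mathrm{mod}(\mathcal A_i)\le\frac{(d-1)g_v}{2^{i+1}},$$ and the annulus $\mathcal A_0=\mathcal B(0,e^{g_v})^-\setminus\mathcal B_1$ satisfies $g_v\le\mathrm{mod}(\mathcal A_0)\le (d-1)g_v/2$.
   Context: Setting: $K$ a number field or a finite extension of $k(t)$ ($k$ algebraically closed, characteristic $0$); $f\in K[z]$ monic of degree $d\ge3$ with $0$ a superattracting fixed point; $v$ a nonarchimedean place of bad reduction not lying above any prime integer $\le d$; $g_v$ the splitting radius of $f$ at $v$ (log of the radius of the smallest closed disk $\{\hat\lambda_v\le g\}$ that is still a single disk, where $\hat\lambda_v(z)=\lim d^{-n}\log^+|f^n(z)|_v$). $\mathcal B_1$ is the disk component of $f^{-1}(\mathcal B(0,e^{g_v}))$ containing $0$, and $\mathcal B_i$ ($i\ge2$) the disk component of $f^{-(i-1)}(\mathcal B_1)$ containing $0$. $\mathcal B(a,R)^-=\{x:[T-a]_x<R\}$ denotes the open Berkovich disk. For an annulus $\mathcal B\setminus\mathcal B'$, $\mathrm{mod}=\log\delta_v(\mathcal B,\mathcal B)-\log\delta_v(\mathcal B',\mathcal B')$, $\delta_v$ the Hsia kernel relative to $\infty$. *)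

theory Defs
  imports "HOL-Computational_Algebra.Computational_Algebra"
begin

text \<open>A nonarchimedean absolute value on a field (a representative of a nonarchimedean place).\<close>
definition nonarch_abs :: "('a::field \<Rightarrow> real) \<Rightarrow> bool" where
  "nonarch_abs w \<longleftrightarrow> w 0 = 0 \<and> (\<forall>x. x \<noteq> 0 \<longrightarrow> w x > 0) \<and>
     (\<forall>x y. w (x * y) = w x * w y) \<and> (\<forall>x y. w (x + y) \<le> max (w x) (w y))"

definition nonarch_place :: "('a::field \<Rightarrow> real) \<Rightarrow> bool" where
  "nonarch_place w \<longleftrightarrow> nonarch_abs w \<and> (\<exists>x. w x \<noteq> 0 \<and> w x \<noteq> 1)"

definition not_above_small_primes :: "('a::field \<Rightarrow> real) \<Rightarrow> nat \<Rightarrow> bool" where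
  "not_above_small_primes w d \<longleftrightarrow> (\<forall>p::nat. prime p \<and> p \<le> d \<longrightarrow> w (of_nat p) = 1)"

definition number_field :: "'a::field_char_0 itself \<Rightarrow> bool" where
  "number_field _ \<longleftrightarrow> (\<exists>B::'a set. finite B \<and> (\<forall>x. \<exists>c. x = (\<Sum>b\<in>B. of_rat (c b) * b)))"

definition subfield :: "'a::field set \<Rightarrow> bool" where
  "subfield k \<longleftrightarrow> 0 \<in> k \<and> 1 \<in> k \<and> (\<forall>x\<in>k. \<forall>y\<in>k. x + y \<in> k \<and> x * y \<in> k \<and> - x \<in> k)
     \<and> (\<forall>x\<in>k. x \<noteq> 0 \<longrightarrow> inverse x \<in> k)"

definition alg_closed_subfield :: "'a::field set \<Rightarrow> bool" where
  "alg_closed_subfield k \<longleftrightarrow> subfield k \<and>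
     (\<forall>p. (\<forall>i. coeff p i \<in> k) \<and> degree p \<ge> 1 \<longrightarrow> (\<exists>z\<in>k. poly p z = 0))"

definition rat_fun_field :: "'a::field set \<Rightarrow> 'a \<Rightarrow> 'a set" where
  "rat_fun_field k t = {poly p t / poly q t | p q. (\<forall>i. coeff p i \<in> k) \<and> (\<forall>i. coeff q i \<in> k)
                                                 \<and> poly q t \<noteq> 0}"

text \<open>K (the whole type) is a finite extension of k(t), with k algebraically closed (of
  characteristic 0, since K has characteristic 0) and t transcendental over k.\<close>
definition function_field_over :: "'a::field_char_0 set \<Rightarrow> bool" where
  "function_field_over k \<longleftrightarrow> alg_closed_subfield k \<and>
     (\<exists>t. (\<forall>p. (\<forall>i. coeff p i \<in> k) \<and> poly p t = 0 \<longrightarrow> p = 0) \<and>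
          (\<exists>B::'a set. finite B \<and> (\<forall>x. \<exists>c. (\<forall>b. c b \<in> rat_fun_field k t) \<and> x = (\<Sum>b\<in>B. c b * b))))"

definition admissible_place :: "('a::field_char_0 \<Rightarrow> real) \<Rightarrow> bool" where
  "admissible_place v \<longleftrightarrow> nonarch_place v \<and>
     (number_field TYPE('a) \<or> (\<exists>k. function_field_over k \<and> (\<forall>a\<in>k. a \<noteq> 0 \<longrightarrow> v a = 1)))"

definition alg_closed_field :: "'b::field itself \<Rightarrow> bool" where
  "alg_closed_field _ \<longleftrightarrow> (\<forall>p::'b poly. degree p \<ge> 1 \<longrightarrow> (\<exists>z. poly p z = 0))"

definition complete_wrt :: "('b::field \<Rightarrow> real) \<Rightarrow> bool" where
  "complete_wrt w \<longleftrightarrow> (\<forall>X::nat \<Rightarrow> 'b. (\<forall>e>0. \<exists>N. \<forall>m\<ge>N. \<forall>n\<ge>N. w (X m - X n) < e) \<longrightarrow>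
       (\<exists>l. \<forall>e>0. \<exists>N. \<forall>n\<ge>N. w (X n - l) < e))"

definition valued_embedding :: "('a::field \<Rightarrow> real) \<Rightarrow> ('b::field \<Rightarrow> real) \<Rightarrow> ('a \<Rightarrow> 'b) \<Rightarrow> bool" where
  "valued_embedding v w \<sigma> \<longleftrightarrow> \<sigma> 1 = 1 \<and> (\<forall>x y. \<sigma> (x + y) = \<sigma> x + \<sigma> y \<and> \<sigma> (x * y) = \<sigma> x * \<sigma> y)
     \<and> (\<forall>x. w (\<sigma> x) = v x)"

definition cdisk :: "('b::field \<Rightarrow> real) \<Rightarrow> 'b \<Rightarrow> real \<Rightarrow> 'b set" where
  "cdisk w a r = {z. w (z - a) \<le> r}"

definition logplus :: "real \<Rightarrow> real" where
  "logplus x = (if x \<le> 1 then 0 else ln x)"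

definition escape_rate :: "('b::field \<Rightarrow> real) \<Rightarrow> nat \<Rightarrow> ('b \<Rightarrow> 'b) \<Rightarrow> 'b \<Rightarrow> real" where
  "escape_rate w d F z = lim (\<lambda>n. logplus (w ((F ^^ n) z)) / real d ^ n)"

definition splitting_radius :: "('b::field \<Rightarrow> real) \<Rightarrow> nat \<Rightarrow> ('b \<Rightarrow> 'b) \<Rightarrow> real" where
  "splitting_radius w d F =
     ln (Inf {\<rho>. \<rho> > 0 \<and> (\<exists>g a. {z. escape_rate w d F z \<le> g} = cdisk w a \<rho>)})"

text \<open>Radius of the disk component containing 0 of \<open>G\<^sup>-\<^sup>1(B(0,R))\<close> (G a polynomial map):
  the supremum of the radii of closed disks about 0 contained in the preimage.
  The classical points of the Berkovich component are exactly the closed disk of this radius.\<close>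
definition comp_radius :: "('b::field \<Rightarrow> real) \<Rightarrow> ('b \<Rightarrow> 'b) \<Rightarrow> real \<Rightarrow> real" where
  "comp_radius w G R = Sup {\<rho>. \<rho> > 0 \<and> cdisk w 0 \<rho> \<subseteq> G -` cdisk w 0 R}"

text \<open>Radius of \<open>\<B>\<^sub>i\<close> (i \<ge> 1): \<open>\<B>\<^sub>1\<close> is the component of \<open>f\<^sup>-\<^sup>1(B(0,e^{g_v}))\<close> containing 0,
  \<open>\<B>\<^sub>i\<close> the component of \<open>f^{-(i-1)}(\<B>\<^sub>1)\<close> containing 0.\<close>
definition B_radius :: "('b::field \<Rightarrow> real) \<Rightarrow> nat \<Rightarrow> ('b \<Rightarrow> 'b) \<Rightarrow> nat \<Rightarrow> real" where
  "B_radius w d F i =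
     (let r1 = comp_radius w F (exp (splitting_radius w d F)) in comp_radius w (F ^^ (i - 1)) r1)"

text \<open>Hsia kernel relative to \<open>\<infinity>\<close> on the diagonal at a disk point: \<open>\<delta>(\<zeta>\<^sub>a\<^sub>,\<^sub>r,\<zeta>\<^sub>a\<^sub>,\<^sub>r) = r\<close>
  (also for the open disk \<open>B(a,r)\<^sup>-\<close>, whose boundary point is \<open>\<zeta>\<^sub>a\<^sub>,\<^sub>r\<close>).\<close>
definition hsia_diag :: "real \<Rightarrow> real" where
  "hsia_diag r = r"

definition annulus_mod :: "real \<Rightarrow> real \<Rightarrow> real" where
  "annulus_mod R R' = ln (hsia_diag R) - ln (hsia_diag R')"

end

theory Submission
  imports Defs
begin

(* Over C_v write f = z^2 * prod_c (z - c). Because the value group is dense and the residue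
   characteristic exceeds d, f maps every closed disk D(0, r) onto D(0, phi r) with
   phi r = r^2 * prod_c max r |c|. Let M = max |c|, which exceeds 1 by bad reduction. The escape rate
   is ln |z| outside D(0, M) and lies in [0, ln M] on it, while 0 and a root of modulus M have escape
   rate 0; hence g_v = ln M, and B_i is the disk of radius r_i = phi^(-i) M. On (0, M] the map phi
   has logarithmic slope between 2 and d - 1, so the moduli m_i = ln (r_i / r_(i+1)) satisfy
   2 m_(i+1) <= m_i <= (d - 1) m_(i+1); together with ln M <= m_0 <= (d - 1) ln M / 2 this gives
   the bounds by induction. *)

locale nonarch_value =
  fixes w :: "'a::field \<Rightarrow> real"
  assumes nonarch: "nonarch_abs w"
begin

lemma w_zero [simp]: "w 0 = 0"
  using nonarch by (simp add: nonarch_abs_def)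

lemma w_pos: "x \<noteq> 0 \<Longrightarrow> w x > 0"
  using nonarch by (simp add: nonarch_abs_def)

lemma w_mult: "w (x * y) = w x * w y"
  using nonarch by (simp add: nonarch_abs_def)

lemma w_add_le: "w (x + y) \<le> max (w x) (w y)"
  using nonarch by (simp add: nonarch_abs_def)

lemma w_nonneg [simp]: "w x \<ge> 0"
  using w_pos by (cases "x = 0") (auto simp: less_imp_le)

lemma w_one [simp]: "w 1 = 1"
  using w_mult[of 1 1] w_pos[of 1] by simp

lemma w_minus [simp]: "w (- x) = w x"
proof -
  have "w (-1) * w (-1) = 1"
    using w_mult[of "-1" "-1"] by simp
  then have "w (-1) = 1"
    using w_nonneg[of "-1"] by (metis abs_of_nonneg power2_eq_square real_sqrt_abs real_sqrt_one)
  then show ?thesis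
    using w_mult[of "-1" x] by simp
qed

lemma w_diff_le: "w (x - y) \<le> max (w x) (w y)"
  using w_add_le[of x "-y"] by simp

lemma w_add_eq_max:
  assumes "w x \<noteq> w y"
  shows "w (x + y) = max (w x) (w y)"
proof -
  have larger: "w a \<le> w (a + b)" if "w b < w a" for a b
  proof -
    have "w a \<le> max (w (a + b)) (w b)"
      using w_add_le[of "a + b" "- b"] by simp
    then show ?thesis
      using that by linarith
  qed
  show ?thesis
    using assms w_add_le[of x y] larger[of y x] larger[of x y]
    by (cases "w y < w x") (auto simp: add.commute max_def)
qed

lemma w_diff_eq_max: "w x \<noteq> w y \<Longrightarrow> w (x - y) = max (w x) (w y)"
  using w_add_eq_max[of x "-y"] by simp

lemma w_power: "w (x ^ n) = w x ^ n"
  by (induction n) (auto simp: w_mult)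

lemma w_prod_list: "w (prod_list xs) = prod_list (map w xs)"
  by (induction xs) (auto simp: w_mult)

lemma w_inverse: "w (inverse x) = inverse (w x)"
proof (cases "x = 0")
  case False
  then have "w (inverse x) * w x = 1"
    using w_mult[of "inverse x" x] by simp
  then show ?thesis
    by (metis inverse_unique mult.commute)
qed simp

lemma w_power_int: "w (power_int x n) = power_int (w x) n"
  by (cases "n \<ge> 0") (auto simp: power_int_def w_power w_inverse)

lemma w_sum_le:
  assumes "finite A" "B \<ge> 0" "\<And>i. i \<in> A \<Longrightarrow> w (f i) \<le> B"
  shows "w (sum f A) \<le> B"
  using assms
proof (induction A rule: finite_induct)
  case (insert x A)
  then have "w (f x) \<le> B" "w (sum f A) \<le> B"
    by auto
  then show ?case
    using w_add_le[of "f x" "sum f A"] insert(1,2) by simp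
qed simp

lemma w_of_nat_eq_1:
  assumes primes: "\<And>p. prime p \<Longrightarrow> p \<le> d \<Longrightarrow> w (of_nat p) = 1" and "1 \<le> n" "n \<le> d"
  shows "w (of_nat n) = 1"
  using assms(2,3)
proof (induction n rule: less_induct)
  case (less n)
  show ?case
  proof (cases "n = 1")
    case False
    then obtain p k where p: "prime p" and n: "n = p * k"
      using prime_factor_nat by (metis dvdE)
    have "1 \<le> k"
      using less.prems n by (cases k) auto
    moreover have "2 \<le> p"
      using prime_ge_2_nat[OF p] .
    ultimately have "k < n" "p \<le> n"
      using n by simp_all
    then have "w (of_nat k) = 1" "w (of_nat p) = 1"
      using less \<open>1 \<le> k\<close> primes[OF p] by auto
    then show ?thesis
      using n by (simp add: w_mult)
  qed simp
qed

lemma exists_w_between_0_1: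
  assumes "\<exists>x. w x \<noteq> 0 \<and> w x \<noteq> 1"
  obtains \<pi> where "\<pi> \<noteq> 0" "w \<pi> < 1"
proof -
  obtain x where x: "w x \<noteq> 0" "w x \<noteq> 1"
    using assms by blast
  then have "x \<noteq> 0"
    by auto
  show thesis
  proof (cases "w x < 1")
    case False
    then have "w (inverse x) < 1"
      using x by (simp add: w_inverse inverse_less_1_iff)
    then show thesis
      using that[of "inverse x"] \<open>x \<noteq> 0\<close> by simp
  qed (use \<open>x \<noteq> 0\<close> that in blast)
qed

lemma w_rational_powr:
  assumes alg_closed: "alg_closed_field TYPE('a)" and "\<pi> \<noteq> 0" "q \<in> \<rat>"
  shows "\<exists>y. w y = w \<pi> powr q"
proof -
  obtain m n where mn: "n > 0" "q = of_int m / of_int n"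
    using Rats_cases'[OF \<open>q \<in> \<rat>\<close>] by metis
  define c where "c = power_int \<pi> m"
  have "1 \<le> nat n"
    using mn by simp
  then have "degree ([:-c:] + monom 1 (nat n)) = nat n"
    by (subst degree_add_eq_right) (auto simp: degree_monom_eq)
  then obtain y where "poly ([:-c:] + monom 1 (nat n)) y = 0"
    using alg_closed[unfolded alg_closed_field_def, rule_format, of "[:-c:] + monom 1 (nat n)"]
      \<open>1 \<le> nat n\<close> by auto
  then have y: "y ^ nat n = c"
    by (simp add: poly_monom)
  have "c \<noteq> 0"
    using \<open>\<pi> \<noteq> 0\<close> by (simp add: c_def)
  then have "y \<noteq> 0"
    using y \<open>1 \<le> nat n\<close> by auto
  then have pos: "0 < w \<pi>" "0 < w y"
    using w_pos \<open>\<pi> \<noteq> 0\<close> by auto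
  have "w y ^ nat n = power_int (w \<pi>) m"
    using y by (metis c_def w_power w_power_int)
  then have "w y powr real (nat n) = w \<pi> powr real_of_int m"
    using pos by (simp add: powr_realpow powr_real_of_int')
  then have "(w y powr real (nat n)) powr (1 / n) = (w \<pi> powr m) powr (1 / n)"
    by simp
  then show ?thesis
    using mn by (auto simp: powr_powr)
qed

lemma w_values_dense:
  assumes alg_closed: "alg_closed_field TYPE('a)" and nontrivial: "\<exists>x. w x \<noteq> 0 \<and> w x \<noteq> 1"
    and "0 < \<rho>" "s < \<rho>"
  shows "\<exists>x. s < w x \<and> w x < \<rho>"
proof -
  obtain \<pi> where \<pi>: "\<pi> \<noteq> 0" "w \<pi> < 1"
    using exists_w_between_0_1[OF nontrivial] by blast
  define a where "a = w \<pi>"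
  have a: "0 < a" "ln a < 0"
    using \<pi> w_pos by (auto simp: a_def)
  define s' where "s' = max s (\<rho> / 2)"
  have s': "0 < s'" "s' < \<rho>" "s \<le> s'"
    using assms by (auto simp: s'_def)
  then have "ln \<rho> / ln a < ln s' / ln a"
    using a by (simp add: divide_strict_right_mono_neg)
  then obtain q where q: "q \<in> \<rat>" "ln \<rho> / ln a < q" "q < ln s' / ln a"
    using Rats_dense_in_real by blast
  obtain y where y: "w y = a powr q"
    using w_rational_powr[OF alg_closed \<pi>(1) q(1)] a_def by blast
  have "ln s' < q * ln a" "q * ln a < ln \<rho>"
    using q a by (auto simp: field_simps)
  moreover have "w y = exp (q * ln a)"
    using a by (simp add: y powr_def mult.commute)
  ultimately have "s' < w y" "w y < \<rho>"
    using s' \<open>0 < \<rho>\<close> by (metis exp_less_cancel_iff exp_ln)+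
  then show ?thesis
    using \<open>s \<le> s'\<close> by (intro exI[of _ y]) auto
qed

end

lemma prod_list_map_nonneg:
  "(\<And>x. x \<in> set xs \<Longrightarrow> (0::real) \<le> f x) \<Longrightarrow> 0 \<le> prod_list (map f xs)"
  by (induction xs) auto

lemma prod_list_map_pos:
  "(\<And>x. x \<in> set xs \<Longrightarrow> (0::real) < f x) \<Longrightarrow> 0 < prod_list (map f xs)"
  by (induction xs) auto

lemma prod_list_map_mono:
  "(\<And>x. x \<in> set xs \<Longrightarrow> (0::real) \<le> f x \<and> f x \<le> g x) \<Longrightarrow> prod_list (map f xs) \<le> prod_list (map g xs)"
proof (induction xs)
  case (Cons a xs)
  then have "0 \<le> f a" "f a \<le> g a" "prod_list (map f xs) \<le> prod_list (map g xs)"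
    by auto
  moreover have "0 \<le> prod_list (map f xs)"
    using Cons.prems by (intro prod_list_map_nonneg) auto
  ultimately show ?case
    by (simp add: mult_mono)
qed simp

lemma prod_list_map_le_power_mult:
  assumes "\<And>x. x \<in> set xs \<Longrightarrow> (0::real) \<le> g x \<and> g x \<le> q * f x" "q \<ge> 0"
  shows "prod_list (map g xs) \<le> q ^ length xs * prod_list (map f xs)"
  using assms(1)
proof (induction xs)
  case (Cons a xs)
  then have "g a * prod_list (map g xs) \<le> (q * f a) * (q ^ length xs * prod_list (map f xs))"
    by (intro mult_mono) (auto intro: prod_list_map_nonneg order_trans)
  then show ?case
    by (simp add: algebra_simps)
qed simp

lemma prod_list_map_ge_1: "(\<And>x. x \<in> set xs \<Longrightarrow> 1 \<le> f x) \<Longrightarrow> (1::real) \<le> prod_list (map f xs)"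
  by (induction xs) (auto intro: mult_ge1_I)

lemma prod_list_map_const: "(\<And>x. x \<in> set xs \<Longrightarrow> f x = (c::real)) \<Longrightarrow> prod_list (map f xs) = c ^ length xs"
  by (induction xs) auto

lemma prod_list_map_remove1:
  "x \<in> set xs \<Longrightarrow> prod_list (map f xs) = (f x::real) * prod_list (map f (remove1 x xs))"
  by (induction xs) auto

lemma isCont_prod_list_map_max: "isCont (\<lambda>r::real. prod_list (map (\<lambda>c. max r (g c)) xs)) x"
  by (induction xs) (auto intro!: continuous_intros)

lemma max_le_ratio_mult:
  fixes a b x :: real
  assumes "0 < a" "a \<le> b"
  shows "max b x \<le> (b / a) * max a x"
proof (cases "x \<le> a")
  case False
  have "1 \<le> b / a" "(b / a) * a = b"
    using assms by simp_all
  moreover have "1 * x \<le> (b / a) * x"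
    using \<open>1 \<le> b / a\<close> False assms by (intro mult_right_mono) auto
  moreover have "(b / a) * a \<le> (b / a) * x"
    using \<open>1 \<le> b / a\<close> False by (intro mult_left_mono) auto
  ultimately show ?thesis
    using False by simp
qed (use assms in simp)

lemma logplus_nonneg: "logplus x \<ge> 0"
  by (simp add: logplus_def)

lemma logplus_power: "T > 1 \<Longrightarrow> logplus (T ^ n) = real n * ln T"
  by (cases "n = 0") (simp_all add: logplus_def ln_realpow not_le one_less_power)

text \<open>The polynomial over \<open>C\<^sub>v\<close> in factored form, together with the two properties of \<open>C\<^sub>v\<close> that
  are used: its value group is dense, and \<open>1, \<dots>, d\<close> are units (residue characteristic \<open>> d\<close>).\<close>

locale superattracting_poly = nonarch_value w for w :: "'a::field \<Rightarrow> real" +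
  fixes d :: nat and cs :: "'a list" and F :: "'a \<Rightarrow> 'a"
  assumes values_dense: "\<And>\<rho> s. 0 < \<rho> \<Longrightarrow> s < \<rho> \<Longrightarrow> \<exists>x. s < w x \<and> w x < \<rho>"
    and of_nat_unit: "\<And>n. 1 \<le> n \<Longrightarrow> n \<le> d \<Longrightarrow> w (of_nat n) = 1"
    and length_roots: "length cs = d - 2"
    and F_eq: "\<And>z. F z = z * z * prod_list (map (\<lambda>c. z - c) cs)"
    and F_minus_splits: "\<And>y. \<exists>es. \<forall>z. F z - y = prod_list (map (\<lambda>e. z - e) es)"
    and large_root: "\<exists>c\<in>set cs. w c > 1"
begin

lemma d_ge_3: "d \<ge> 3"
  using large_root length_roots by (cases cs) auto

definition root_radius :: real where
  "root_radius = Max (w ` set cs)"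

lemma w_root_le_root_radius: "c \<in> set cs \<Longrightarrow> w c \<le> root_radius"
  by (simp add: root_radius_def)

lemma root_radius_attained:
  obtains c where "c \<in> set cs" "w c = root_radius"
proof -
  have "cs \<noteq> []"
    using large_root by auto
  then have "root_radius \<in> w ` set cs"
    unfolding root_radius_def by (intro Max_in) auto
  then show thesis
    using that by (metis imageE)
qed

lemma root_radius_gt_1: "root_radius > 1"
  using large_root w_root_le_root_radius by fastforce

lemma w_F_eq: "w (F z) = w z * w z * prod_list (map (\<lambda>c. w (z - c)) cs)"
  by (simp add: F_eq w_mult w_prod_list comp_def)

lemma F_0 [simp]: "F 0 = 0"
  by (simp add: F_eq)

lemma F_root: "c \<in> set cs \<Longrightarrow> F c = 0"
  by (simp add: F_eq prod_list_zero_iff)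

text \<open>\<open>radius_map r\<close> is the radius of the image under \<open>F\<close> of the closed disk of radius \<open>r\<close> about 0.\<close>

definition radius_map :: "real \<Rightarrow> real" where
  "radius_map r = r * r * prod_list (map (\<lambda>c. max r (w c)) cs)"

lemma radius_map_nonneg: "r \<ge> 0 \<Longrightarrow> radius_map r \<ge> 0"
  by (simp add: radius_map_def prod_list_map_nonneg)

lemma radius_map_pos: "r > 0 \<Longrightarrow> radius_map r > 0"
  by (simp add: radius_map_def prod_list_map_pos)

lemma radius_map_mono:
  assumes "0 \<le> a" "a \<le> b"
  shows "radius_map a \<le> radius_map b"
proof -
  have "prod_list (map (\<lambda>c. max a (w c)) cs) \<le> prod_list (map (\<lambda>c. max b (w c)) cs)"
    using assms by (intro prod_list_map_mono) auto
  then show ?thesis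
    unfolding radius_map_def using assms by (intro mult_mono) (auto intro!: prod_list_map_nonneg)
qed

lemma radius_map_strict_mono:
  assumes "0 < a" "a < b"
  shows "radius_map a < radius_map b"
proof -
  have "prod_list (map (\<lambda>c. max a (w c)) cs) \<le> prod_list (map (\<lambda>c. max b (w c)) cs)"
    using assms by (intro prod_list_map_mono) auto
  moreover have "a * a < b * b"
    using assms by (simp add: mult_strict_mono)
  moreover have "0 < prod_list (map (\<lambda>c. max a (w c)) cs)"
    using assms by (intro prod_list_map_pos) auto
  ultimately show ?thesis
    unfolding radius_map_def using assms by (intro mult_less_le_imp_less) auto
qed

lemma radius_map_le_iff: "0 < a \<Longrightarrow> 0 < b \<Longrightarrow> radius_map a \<le> radius_map b \<longleftrightarrow> a \<le> b"
  using radius_map_strict_mono radius_map_mono by (metis less_le not_le)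

lemma isCont_radius_map: "isCont radius_map x"
  unfolding radius_map_def[abs_def] by (intro continuous_intros isCont_prod_list_map_max)

lemma radius_map_surj:
  assumes "0 < R"
  shows "\<exists>r>0. radius_map r = R"
proof -
  define C where "C = prod_list (map (\<lambda>c. max 1 (w c)) cs)"
  have C: "C \<ge> 1"
    unfolding C_def by (rule prod_list_map_ge_1) simp
  define a where "a = min 1 (R / (C + 1))"
  have a: "0 < a" "a \<le> 1"
    using assms C by (auto simp: a_def)
  have "prod_list (map (\<lambda>c. max a (w c)) cs) \<le> C"
    unfolding C_def using a by (intro prod_list_map_mono) auto
  then have "radius_map a \<le> a * a * C"
    unfolding radius_map_def using a by (simp add: mult_left_mono)
  also have "\<dots> \<le> a * C"
    using a C by (simp add: mult_le_cancel_right1 mult_right_le_one_le)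
  also have "\<dots> \<le> R / (C + 1) * C"
    using a C unfolding a_def by (intro mult_right_mono) auto
  also have "\<dots> \<le> R"
    using C assms by (simp add: field_simps)
  finally have "radius_map a \<le> R" .
  define b where "b = max 1 R"
  have "1 \<le> prod_list (map (\<lambda>c. max b (w c)) cs)"
    by (rule prod_list_map_ge_1) (simp add: b_def)
  then have "b * b \<le> radius_map b"
    unfolding radius_map_def using mult_left_mono[of 1 _ "b * b"] by simp
  moreover have "R \<le> b * b"
    by (auto simp: b_def max_def intro: order_trans[of R R "R * R"])
  ultimately have "R \<le> radius_map b"
    by simp
  moreover have "a \<le> b"
    using a by (simp add: b_def)
  ultimately obtain x where "a \<le> x" "radius_map x = R"
    using IVT'[of radius_map a R b] \<open>radius_map a \<le> R\<close> isCont_radius_map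
    by (auto intro: continuous_at_imp_continuous_on)
  then show ?thesis
    using a by (intro exI[of _ x]) auto
qed

lemma w_F_le: "w (F z) \<le> radius_map (w z)"
  unfolding w_F_eq radius_map_def by (intro mult_left_mono prod_list_map_mono) (auto simp: w_diff_le)

lemma w_F_large:
  assumes "w z > root_radius"
  shows "w (F z) = w z ^ d"
proof -
  have "w (z - c) = w z" if "c \<in> set cs" for c
    using w_diff_eq_max[of z c] w_root_le_root_radius[OF that] assms by auto
  then have "prod_list (map (\<lambda>c. w (z - c)) cs) = w z ^ (d - 2)"
    using prod_list_map_const length_roots by metis
  moreover obtain k where "d = Suc (Suc k)"
    using d_ge_3 by (intro that[of "d - 2"]) arith
  ultimately show ?thesis
    by (simp add: w_F_eq)
qed

lemma radius_map_root_radius: "radius_map root_radius = root_radius ^ d"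
proof -
  have "prod_list (map (\<lambda>c. max root_radius (w c)) cs) = root_radius ^ (d - 2)"
    using prod_list_map_const[of cs "\<lambda>c. max root_radius (w c)" root_radius] w_root_le_root_radius
      length_roots by (simp add: max_absorb1)
  moreover obtain k where "d = Suc (Suc k)"
    using d_ge_3 by (intro that[of "d - 2"]) arith
  ultimately show ?thesis
    by (simp add: radius_map_def)
qed

lemma radius_map_le_of_le_root_radius:
  assumes "0 \<le> r" "r \<le> root_radius"
  shows "radius_map r \<le> r * r * root_radius ^ (d - 2)"
proof -
  have "prod_list (map (\<lambda>c. max r (w c)) cs) \<le> prod_list (map (\<lambda>c. root_radius) cs)"
    using assms root_radius_gt_1 w_root_le_root_radius by (intro prod_list_map_mono) auto
  then show ?thesis
    unfolding radius_map_def using length_roots by (simp add: prod_list_map_const mult_left_mono)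
qed

lemma radius_map_eq_remove1:
  assumes "c \<in> set cs" "w c = root_radius"
  shows "radius_map r = r * r * max r root_radius * prod_list (map (\<lambda>c. max r (w c)) (remove1 c cs))"
  using prod_list_map_remove1[OF assms(1)] assms(2) by (simp add: radius_map_def)

lemma root_radius_le_radius_map_1: "root_radius \<le> radius_map 1"
proof -
  obtain c where c: "c \<in> set cs" "w c = root_radius"
    using root_radius_attained .
  have "1 \<le> prod_list (map (\<lambda>c. max 1 (w c)) (remove1 c cs))"
    by (rule prod_list_map_ge_1) simp
  then show ?thesis
    using radius_map_eq_remove1[OF c, of 1] root_radius_gt_1 by (simp add: mult_le_cancel_left1)
qed

lemma radius_map_ratio_lower:
  assumes "0 < a" "a \<le> b"
  shows "(b / a) ^ 2 * radius_map a \<le> radius_map b"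
proof -
  have "prod_list (map (\<lambda>c. max a (w c)) cs) \<le> prod_list (map (\<lambda>c. max b (w c)) cs)"
    using assms by (intro prod_list_map_mono) auto
  then have "b * b * prod_list (map (\<lambda>c. max a (w c)) cs) \<le> radius_map b"
    unfolding radius_map_def by (simp add: mult_left_mono)
  moreover have "(b / a) ^ 2 * radius_map a = ((b / a) ^ 2 * (a * a)) * prod_list (map (\<lambda>c. max a (w c)) cs)"
    by (simp add: radius_map_def mult.assoc)
  moreover have "(b / a) ^ 2 * (a * a) = b * b"
    using assms by (simp add: power2_eq_square field_simps)
  ultimately show ?thesis
    by simp
qed

lemma radius_map_ratio_upper:
  assumes "0 < a" "a \<le> b" "b \<le> root_radius"
  shows "radius_map b \<le> (b / a) ^ (d - 1) * radius_map a"
proof -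
  obtain c where c: "c \<in> set cs" "w c = root_radius"
    using root_radius_attained .
  define R where "R x = prod_list (map (\<lambda>c. max x (w c)) (remove1 c cs))" for x
  have "R b \<le> (b / a) ^ length (remove1 c cs) * R a"
    unfolding R_def using max_le_ratio_mult[OF assms(1,2)] assms(1,2)
    by (intro prod_list_map_le_power_mult) (auto intro: order_trans[OF _ max.cobounded1])
  moreover have "length (remove1 c cs) = d - 3"
    using c length_roots by (simp add: length_remove1)
  ultimately have "radius_map b \<le> b * b * root_radius * ((b / a) ^ (d - 3) * R a)"
    using radius_map_eq_remove1[OF c, of b] assms root_radius_gt_1
    by (simp add: R_def mult_left_mono)
  also have "\<dots> = (b / a) ^ (2 + (d - 3)) * (a * a * root_radius * R a)"
    using assms by (simp add: power_add power2_eq_square field_simps)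
  also have "\<dots> = (b / a) ^ (d - 1) * radius_map a"
    using radius_map_eq_remove1[OF c, of a] assms d_ge_3
    by (simp add: R_def Suc_diff_Suc numeral_3_eq_3)
  finally show ?thesis .
qed

lemma w_of_nat_mult: "1 \<le> u \<Longrightarrow> u \<le> d \<Longrightarrow> w (of_nat u * t) = w t"
  by (simp add: w_mult of_nat_unit)

lemma w_of_nat_diff:
  assumes "a \<in> {1..d}" "b \<in> {1..d}" "a \<noteq> b"
  shows "w (of_nat a - of_nat b :: 'a) = 1"
proof (cases "a > b")
  case True
  then have "(of_nat a - of_nat b :: 'a) = of_nat (a - b)"
    by (simp add: of_nat_diff)
  then show ?thesis
    using True assms of_nat_unit[of "a - b"] by simp
next
  case False
  then have "(of_nat a - of_nat b :: 'a) = - of_nat (b - a)"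
    by (simp add: of_nat_diff)
  then show ?thesis
    using False assms of_nat_unit[of "b - a"] by (simp only: w_minus) simp
qed

text \<open>Two multiples \<open>u t\<close>, \<open>u' t\<close> with \<open>1 \<le> u < u' \<le> d\<close> differ by \<open>(u' - u) t\<close>, which has absolute value
  \<open>|t|\<close> since the residue characteristic exceeds \<open>d\<close>; so they cannot both be closer than \<open>|t|\<close> to \<open>c\<close>.\<close>

lemma card_nongeneric_multiples_le_1:
  "card {u\<in>{1..d}. w (of_nat u * t - c) \<noteq> max (w t) (w c)} \<le> 1"
proof -
  define Bad where "Bad = {u\<in>{1..d}. w (of_nat u * t - c) \<noteq> max (w t) (w c)}"
  have close: "w (of_nat u * t - c) < w t" if "u \<in> Bad" for u
  proof -
    have u: "u \<in> {1..d}" "w (of_nat u * t - c) \<noteq> max (w t) (w c)"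
      using that by (auto simp: Bad_def)
    then have "w (of_nat u * t) = w t"
      by (simp add: w_of_nat_mult)
    then have "w c = w t"
      using u w_diff_eq_max[of "of_nat u * t" c] by metis
    then show ?thesis
      using u w_diff_le[of "of_nat u * t" c] \<open>w (of_nat u * t) = w t\<close> by auto
  qed
  have "a = b" if "a \<in> Bad" "b \<in> Bad" for a b
  proof (rule ccontr)
    assume "a \<noteq> b"
    have "(of_nat a - of_nat b) * t = (of_nat a * t - c) - (of_nat b * t - c)"
      by (simp add: algebra_simps)
    then have "w ((of_nat a - of_nat b) * t) < w t"
      using w_diff_le[of "of_nat a * t - c" "of_nat b * t - c"] close[OF that(1)] close[OF that(2)]
      by simp
    then show False
      using w_of_nat_diff[of a b] \<open>a \<noteq> b\<close> that by (auto simp: Bad_def w_mult)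
  qed
  then show ?thesis
    unfolding Bad_def[symmetric] using card_le_Suc0_iff_eq[of Bad] by (auto simp: Bad_def)
qed

lemma exists_generic_multiple:
  "\<exists>u\<in>{1..d}. \<forall>c\<in>set cs. w (of_nat u * t - c) = max (w t) (w c)"
proof -
  define Bad where "Bad c = {u\<in>{1..d}. w (of_nat u * t - c) \<noteq> max (w t) (w c)}" for c
  have "card (\<Union>c\<in>set cs. Bad c) \<le> (\<Sum>c\<in>set cs. card (Bad c))"
    by (rule card_UN_le) simp
  also have "\<dots> \<le> card (set cs)"
    using sum_bounded_above[of "set cs" "\<lambda>c. card (Bad c)" 1] card_nongeneric_multiples_le_1
    by (simp add: Bad_def)
  also have "\<dots> < card {1..d}"
    using card_length[of cs] length_roots d_ge_3 by simp
  finally have "\<not> {1..d} \<subseteq> (\<Union>c\<in>set cs. Bad c)"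
    using card_mono[of "\<Union>c\<in>set cs. Bad c" "{1..d}"] by (auto simp: Bad_def)
  then show ?thesis
    by (auto simp: Bad_def)
qed

lemma exists_w_F_eq_radius_map: "\<exists>z. w z = w t \<and> w (F z) = radius_map (w t)"
proof -
  obtain u where u: "u \<in> {1..d}" "\<forall>c\<in>set cs. w (of_nat u * t - c) = max (w t) (w c)"
    using exists_generic_multiple by blast
  have "w (F (of_nat u * t)) = radius_map (w t)"
    using u unfolding w_F_eq radius_map_def by (simp add: w_of_nat_mult cong: map_cong)
  then show ?thesis
    using u w_of_nat_mult by auto
qed

lemma radius_map_left_approx:
  assumes "0 < \<rho>" "s < radius_map \<rho>"
  shows "\<exists>r. 0 < r \<and> r < \<rho> \<and> s < radius_map r"
proof -
  have "radius_map \<midarrow>\<rho>\<rightarrow> radius_map \<rho>"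
    using isCont_radius_map isCont_def by blast
  then obtain e where e: "e > 0"
    "\<And>x. x \<noteq> \<rho> \<Longrightarrow> norm (x - \<rho>) < e \<Longrightarrow> norm (radius_map x - radius_map \<rho>) < radius_map \<rho> - s"
    unfolding LIM_eq using assms by (metis diff_gt_0_iff_gt)
  define r where "r = max (\<rho> / 2) (\<rho> - e / 2)"
  have "0 < r" "r < \<rho>" "norm (r - \<rho>) < e"
    using assms e by (auto simp: r_def)
  then show ?thesis
    using e(2)[of r] by (intro exI[of _ r]) auto
qed

lemma exists_w_F_gt:
  assumes "0 < \<rho>" "s < radius_map \<rho>"
  shows "\<exists>z. w z < \<rho> \<and> s < w (F z)"
proof -
  obtain r where r: "0 < r" "r < \<rho>" "s < radius_map r"
    using radius_map_left_approx[OF assms] by blast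
  obtain x where x: "r < w x" "w x < \<rho>"
    using values_dense[OF assms(1) r(2)] by blast
  obtain z where "w z = w x" "w (F z) = radius_map (w x)"
    using exists_w_F_eq_radius_map by blast
  moreover have "radius_map r \<le> radius_map (w x)"
    using radius_map_mono r x by simp
  ultimately show ?thesis
    using x r by (intro exI[of _ z]) auto
qed

text \<open>If all roots of \<open>F - y\<close> were outside \<open>D(0, r)\<close>, then \<open>|F z - y|\<close> would be constant on that disk,
  equal to \<open>|F 0 - y| = |y|\<close>; but \<open>|F z|\<close> exceeds \<open>|y|\<close> somewhere in it.\<close>

lemma F_onto_open_disk:
  assumes "0 < \<rho>" "w y < radius_map \<rho>"
  shows "\<exists>z. w z < \<rho> \<and> F z = y"
proof -
  obtain r where r: "0 < r" "r < \<rho>" "w y < radius_map r"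
    using radius_map_left_approx[OF assms] by blast
  obtain es where es: "\<And>z. F z - y = prod_list (map (\<lambda>e. z - e) es)"
    using F_minus_splits by blast
  have "\<exists>e\<in>set es. w e \<le> r"
  proof (rule ccontr)
    assume "\<not> ?thesis"
    then have root_far: "w (z - e) = w e" if "w z < r" "e \<in> set es" for z e
      using that w_diff_eq_max[of z e] by force
    have far: "w (F z - y) = prod_list (map w es)" if "w z < r" for z
    proof -
      have map_eq: "map (\<lambda>e. w (z - e)) es = map w es"
        using root_far[OF that] by (intro map_cong) auto
      show ?thesis
        unfolding es w_prod_list map_map comp_def by (simp only: map_eq)
    qed
    obtain z where "w z < r" "w y < w (F z)"
      using exists_w_F_gt[OF r(1) r(3)] by blast
    then show False
      using far[of z] far[of 0] r(1) w_diff_eq_max[of "F z" y] by simp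
  qed
  then obtain e where "e \<in> set es" "w e \<le> r"
    by blast
  moreover from \<open>e \<in> set es\<close> have "F e - y = 0"
    by (simp add: es prod_list_zero_iff)
  ultimately show ?thesis
    using r by (intro exI[of _ e]) auto
qed

lemma radius_map_iter_pos: "0 < r \<Longrightarrow> 0 < (radius_map ^^ i) r"
  by (induction i) (auto simp: radius_map_pos)

lemma radius_map_iter_nonneg: "0 \<le> r \<Longrightarrow> 0 \<le> (radius_map ^^ i) r"
  by (induction i) (auto simp: radius_map_nonneg)

lemma radius_map_iter_mono: "0 \<le> a \<Longrightarrow> a \<le> b \<Longrightarrow> (radius_map ^^ i) a \<le> (radius_map ^^ i) b"
  by (induction i) (auto simp: radius_map_mono radius_map_iter_nonneg)

lemma radius_map_iter_strict_mono: "0 < a \<Longrightarrow> a < b \<Longrightarrow> (radius_map ^^ i) a < (radius_map ^^ i) b"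
  by (induction i) (auto simp: radius_map_strict_mono radius_map_iter_pos)

lemma radius_map_iter_le_iff:
  "0 < a \<Longrightarrow> 0 < b \<Longrightarrow> (radius_map ^^ i) a \<le> (radius_map ^^ i) b \<longleftrightarrow> a \<le> b"
  using radius_map_iter_strict_mono radius_map_iter_mono by (metis less_le not_le)

lemma w_F_iter_le: "w ((F ^^ i) z) \<le> (radius_map ^^ i) (w z)"
proof (induction i)
  case (Suc i)
  have "w ((F ^^ Suc i) z) \<le> radius_map (w ((F ^^ i) z))"
    using w_F_le by simp
  also have "\<dots> \<le> radius_map ((radius_map ^^ i) (w z))"
    using Suc radius_map_mono by simp
  finally show ?case
    by simp
qed simp

lemma exists_w_F_iter_gt: "0 < \<rho> \<Longrightarrow> s < (radius_map ^^ i) \<rho> \<Longrightarrow> \<exists>z. w z < \<rho> \<and> s < w ((F ^^ i) z)"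
proof (induction i arbitrary: \<rho> s)
  case 0
  then show ?case
    using values_dense[of \<rho> s] by auto
next
  case (Suc i)
  then have "s < (radius_map ^^ i) (radius_map \<rho>)"
    by (simp add: funpow_Suc_right del: funpow.simps)
  then obtain y where y: "w y < radius_map \<rho>" "s < w ((F ^^ i) y)"
    using Suc.IH[of "radius_map \<rho>" s] radius_map_pos Suc.prems by blast
  obtain z where "w z < \<rho>" "F z = y"
    using F_onto_open_disk[OF Suc.prems(1) y(1)] by blast
  then show ?case
    using y by (intro exI[of _ z]) (simp add: funpow_Suc_right del: funpow.simps)
qed

lemma disk_subset_preimage_iff:
  assumes "0 < \<rho>"
  shows "cdisk w 0 \<rho> \<subseteq> (F ^^ i) -` cdisk w 0 R \<longleftrightarrow> (radius_map ^^ i) \<rho> \<le> R"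
proof
  assume sub: "cdisk w 0 \<rho> \<subseteq> (F ^^ i) -` cdisk w 0 R"
  show "(radius_map ^^ i) \<rho> \<le> R"
  proof (rule ccontr)
    assume "\<not> ?thesis"
    then obtain z where "w z < \<rho>" "R < w ((F ^^ i) z)"
      using exists_w_F_iter_gt[OF assms] by (meson not_le)
    moreover from \<open>w z < \<rho>\<close> have "z \<in> cdisk w 0 \<rho>"
      by (simp add: cdisk_def)
    then have "(F ^^ i) z \<in> cdisk w 0 R"
      using sub by blast
    ultimately show False
      by (simp add: cdisk_def)
  qed
next
  assume "(radius_map ^^ i) \<rho> \<le> R"
  show "cdisk w 0 \<rho> \<subseteq> (F ^^ i) -` cdisk w 0 R"
  proof
    fix z
    assume "z \<in> cdisk w 0 \<rho>"
    then have "w ((F ^^ i) z) \<le> (radius_map ^^ i) \<rho>"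
      using w_F_iter_le[of i z] radius_map_iter_mono[of "w z" \<rho> i] by (simp add: cdisk_def)
    then show "z \<in> (F ^^ i) -` cdisk w 0 R"
      using \<open>(radius_map ^^ i) \<rho> \<le> R\<close> by (simp add: cdisk_def)
  qed
qed

lemma comp_radius_F_iter:
  assumes "0 < r" "(radius_map ^^ i) r = R"
  shows "comp_radius w (F ^^ i) R = r"
proof -
  have "\<rho> > 0 \<Longrightarrow> cdisk w 0 \<rho> \<subseteq> (F ^^ i) -` cdisk w 0 R \<longleftrightarrow> \<rho> \<le> r" for \<rho>
    using disk_subset_preimage_iff[of \<rho> i R] radius_map_iter_le_iff[of \<rho> r i] assms by simp
  then have "{\<rho>. \<rho> > 0 \<and> cdisk w 0 \<rho> \<subseteq> (F ^^ i) -` cdisk w 0 R} = {0<..r}"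
    by (intro set_eqI) (metis (no_types, lifting) greaterThanAtMost_iff mem_Collect_eq)
  then show ?thesis
    unfolding comp_radius_def using assms by simp
qed

lemma w_F_iter_large:
  assumes "w z > root_radius"
  shows "w ((F ^^ k) z) = w z ^ (d ^ k)"
proof (induction k)
  case (Suc k)
  have "w z \<le> w z ^ (d ^ k)"
    using power_increasing[of 1 "d ^ k" "w z"] assms root_radius_gt_1 d_ge_3 by simp
  then have "w ((F ^^ Suc k) z) = w ((F ^^ k) z) ^ d"
    using Suc assms w_F_large by simp
  then show ?case
    using Suc by (simp add: power_mult[symmetric] mult.commute)
qed simp

lemma escape_rate_escaping:
  assumes "w ((F ^^ n) z) > root_radius"
  shows "escape_rate w d F z = ln (w ((F ^^ n) z)) / real d ^ n"
proof -
  define T where "T = w ((F ^^ n) z)"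
  have "logplus (w ((F ^^ m) z)) / real d ^ m = ln T / real d ^ n" if "n \<le> m" for m
  proof -
    obtain k where k: "m = k + n"
      using \<open>n \<le> m\<close> le_Suc_ex by (metis add.commute)
    then have "w ((F ^^ m) z) = T ^ (d ^ k)"
      using w_F_iter_large[OF assms, of k] by (simp add: T_def funpow_add)
    then have "logplus (w ((F ^^ m) z)) = real d ^ k * ln T"
      using logplus_power[of T] assms root_radius_gt_1 by (simp add: T_def)
    then show ?thesis
      using d_ge_3 by (simp add: k power_add)
  qed
  then have "(\<lambda>m. logplus (w ((F ^^ m) z)) / real d ^ m) \<longlonglongrightarrow> ln T / real d ^ n"
    by (intro tendsto_eventually eventually_sequentiallyI)
  then show ?thesis
    unfolding escape_rate_def T_def by (rule limI)
qed

lemma escape_rate_large: "w z > root_radius \<Longrightarrow> escape_rate w d F z = ln (w z)"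
  using escape_rate_escaping[of 0] by simp

lemma escape_rate_bounded_orbit:
  assumes "\<And>n. w ((F ^^ n) z) \<le> root_radius"
  shows "escape_rate w d F z = 0"
proof -
  have "(\<lambda>n. logplus (w ((F ^^ n) z)) / real d ^ n) \<longlonglongrightarrow> 0"
  proof (rule real_tendsto_sandwich[of "\<lambda>n. 0" _ _ "\<lambda>n. ln root_radius / real d ^ n"])
    have "logplus (w ((F ^^ n) z)) \<le> ln root_radius" for n
      using assms[of n] root_radius_gt_1 by (auto simp: logplus_def)
    then show "\<forall>\<^sub>F n in sequentially. logplus (w ((F ^^ n) z)) / real d ^ n \<le> ln root_radius / real d ^ n"
      by (intro always_eventually allI divide_right_mono) auto
    show "(\<lambda>n. ln root_radius / real d ^ n) \<longlonglongrightarrow> 0"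
      using d_ge_3 by (intro LIMSEQ_divide_realpow_zero) simp
  qed (simp_all add: logplus_nonneg)
  then show ?thesis
    unfolding escape_rate_def by (rule limI)
qed

text \<open>An orbit starting in \<open>D(0, root_radius)\<close> that escapes does so from a point of that disk, hence to
  absolute value at most \<open>radius_map root_radius = root_radius ^ d\<close>.\<close>

lemma escape_rate_root_disk:
  assumes "w z \<le> root_radius"
  shows "0 \<le> escape_rate w d F z \<and> escape_rate w d F z \<le> ln root_radius"
proof (cases "\<forall>n. w ((F ^^ n) z) \<le> root_radius")
  case True
  then show ?thesis
    using escape_rate_bounded_orbit root_radius_gt_1 by simp
next
  case False
  define n where "n = (LEAST n. root_radius < w ((F ^^ n) z))"
  define T where "T = w ((F ^^ n) z)"
  have T: "root_radius < T"
    using False LeastI_ex[of "\<lambda>n. root_radius < w ((F ^^ n) z)"] by (auto simp: T_def n_def not_le)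
  then obtain m where m: "n = Suc m"
    using assms by (cases n) (auto simp: T_def)
  then have "w ((F ^^ m) z) \<le> root_radius"
    using not_less_Least[of m "\<lambda>n. root_radius < w ((F ^^ n) z)"] by (simp add: n_def)
  then have "T \<le> radius_map root_radius"
    using w_F_le[of "(F ^^ m) z"] radius_map_mono[of "w ((F ^^ m) z)" root_radius]
    by (simp add: T_def m)
  then have "ln T \<le> real d * ln root_radius"
    using T root_radius_gt_1 by (simp add: radius_map_root_radius ln_realpow[symmetric])
  moreover have "real d \<le> real d ^ n"
    using m d_ge_3 power_increasing[of 1 n "real d"] by simp
  moreover have "0 < ln T"
    using T root_radius_gt_1 by simp
  ultimately have "ln T / real d ^ n \<le> real d * ln root_radius / real d"
    using d_ge_3 by (intro frac_le) auto
  then show ?thesis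
    using escape_rate_escaping[of n z] T \<open>0 < ln T\<close> d_ge_3 by (simp add: T_def)
qed

lemma escape_rate_nonneg: "0 \<le> escape_rate w d F z"
  using escape_rate_root_disk[of z] escape_rate_large[of z] root_radius_gt_1 by force

lemma escape_rate_preimage_0:
  assumes "F z = 0"
  shows "escape_rate w d F z = 0"
proof (rule escape_rate_bounded_orbit)
  fix n
  have "w z \<le> root_radius"
  proof (rule ccontr)
    assume "\<not> w z \<le> root_radius"
    then have "w z ^ d = 0"
      using w_F_large[of z] assms by simp
    then show False
      using \<open>\<not> w z \<le> root_radius\<close> root_radius_gt_1 by simp
  qed
  moreover have "(F ^^ m) 0 = 0" for m
    by (induction m) auto
  ultimately show "w ((F ^^ n) z) \<le> root_radius"
    using assms root_radius_gt_1 by (cases n) (simp_all add: funpow_Suc_right del: funpow.simps)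
qed

text \<open>The sublevel set \<open>{escape_rate \<le> ln root_radius}\<close> is the disk \<open>D(0, root_radius)\<close>, and any disk
  sublevel set contains the zeros \<open>0\<close> and \<open>c\<close> of \<open>F\<close>, with \<open>|c| = root_radius\<close>.\<close>

lemma splitting_radius_eq: "splitting_radius w d F = ln root_radius"
proof -
  define S where "S = {\<rho>. \<rho> > 0 \<and> (\<exists>g a. {z. escape_rate w d F z \<le> g} = cdisk w a \<rho>)}"
  have "escape_rate w d F z \<le> ln root_radius \<longleftrightarrow> w z \<le> root_radius" for z
    using escape_rate_large[of z] escape_rate_root_disk[of z] root_radius_gt_1 by (cases "w z \<le> root_radius") auto
  then have "{z. escape_rate w d F z \<le> ln root_radius} = cdisk w 0 root_radius"
    by (auto simp: cdisk_def)
  then have "root_radius \<in> S"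
    using root_radius_gt_1 by (auto simp: S_def)
  moreover have "root_radius \<le> \<rho>" if "\<rho> \<in> S" for \<rho>
  proof -
    obtain g a where ga: "{z. escape_rate w d F z \<le> g} = cdisk w a \<rho>"
      using \<open>\<rho> \<in> S\<close> by (auto simp: S_def)
    obtain c where c: "c \<in> set cs" "w c = root_radius"
      using root_radius_attained .
    have "a \<in> cdisk w a \<rho>"
      using \<open>\<rho> \<in> S\<close> by (simp add: S_def cdisk_def)
    then have "0 \<le> g"
      using ga escape_rate_nonneg[of a] by force
    then have "{c, 0} \<subseteq> {z. escape_rate w d F z \<le> g}"
      using escape_rate_preimage_0 F_root[OF c(1)] by auto
    then have "c \<in> cdisk w a \<rho>" "0 \<in> cdisk w a \<rho>"
      using ga by auto
    then have "w (c - a) \<le> \<rho>" "w a \<le> \<rho>"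
      by (auto simp: cdisk_def)
    then show ?thesis
      using w_add_le[of "c - a" a] c by simp
  qed
  ultimately have "Inf S = root_radius"
    by (intro cInf_eq_minimum) auto
  then show ?thesis
    by (simp add: splitting_radius_def S_def)
qed

definition radius_map_inv :: "real \<Rightarrow> real" where
  "radius_map_inv R = (THE r. 0 < r \<and> radius_map r = R)"

lemma radius_map_inv:
  assumes "0 < R"
  shows "0 < radius_map_inv R" "radius_map (radius_map_inv R) = R"
proof -
  obtain r where r: "0 < r" "radius_map r = R"
    using radius_map_surj[OF assms] by blast
  moreover have "r' = r" if "0 < r'" "radius_map r' = R" for r'
    using radius_map_le_iff[of r' r] radius_map_le_iff[of r r'] r that by auto
  ultimately have "\<exists>!r. 0 < r \<and> radius_map r = R"
    by blast
  from theI'[OF this] show "0 < radius_map_inv R" "radius_map (radius_map_inv R) = R"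
    by (simp_all add: radius_map_inv_def)
qed

text \<open>\<open>pullback_radius i\<close> is the radius of the disk \<open>\<B>\<^sub>i\<close>, and \<open>pullback_radius 0 = root_radius\<close>
  that of \<open>\<B>(0, e^{g_v})\<close>.\<close>

definition pullback_radius :: "nat \<Rightarrow> real" where
  "pullback_radius i = (radius_map_inv ^^ i) root_radius"

lemma pullback_radius_0 [simp]: "pullback_radius 0 = root_radius"
  by (simp add: pullback_radius_def)

lemma pullback_radius_pos: "0 < pullback_radius i"
  by (induction i) (simp_all add: pullback_radius_def root_radius_gt_1 less_trans[OF zero_less_one]
      radius_map_inv(1))

lemma radius_map_pullback_radius: "radius_map (pullback_radius (Suc i)) = pullback_radius i"
  using radius_map_inv(2)[OF pullback_radius_pos[of i]] by (simp add: pullback_radius_def)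

lemma radius_map_iter_pullback_radius: "(radius_map ^^ k) (pullback_radius (Suc k)) = pullback_radius 1"
proof (induction k)
  case (Suc k)
  then show ?case
    using radius_map_pullback_radius[of "Suc k"] by (simp add: funpow_Suc_right del: funpow.simps)
qed simp

lemma B_radius_eq_pullback_radius:
  assumes "i \<ge> 1"
  shows "B_radius w d F i = pullback_radius i"
proof -
  have "exp (splitting_radius w d F) = (radius_map ^^ 1) (pullback_radius 1)"
    using splitting_radius_eq root_radius_gt_1 radius_map_pullback_radius[of 0]
    by simp
  then have "comp_radius w F (exp (splitting_radius w d F)) = pullback_radius 1"
    using comp_radius_F_iter[of "pullback_radius 1" 1] pullback_radius_pos by simp
  moreover obtain k where "i = Suc k"
    using assms by (cases i) auto
  ultimately show ?thesis
    unfolding B_radius_def Let_def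
    using comp_radius_F_iter pullback_radius_pos radius_map_iter_pullback_radius by simp
qed

lemma pullback_radius_1_le_1: "pullback_radius 1 \<le> 1"
proof -
  have "radius_map (pullback_radius 1) \<le> radius_map 1"
    using root_radius_le_radius_map_1 radius_map_pullback_radius[of 0] by simp
  then show ?thesis
    using radius_map_le_iff[OF pullback_radius_pos zero_less_one] by simp
qed

lemma pullback_radius_Suc_le: "pullback_radius (Suc i) \<le> pullback_radius i"
proof (induction i)
  case 0
  then show ?case
    using pullback_radius_1_le_1 root_radius_gt_1 by simp
next
  case (Suc i)
  then have "radius_map (pullback_radius (Suc (Suc i))) \<le> radius_map (pullback_radius (Suc i))"
    by (simp add: radius_map_pullback_radius)
  then show ?case
    using radius_map_le_iff pullback_radius_pos by blast
qed

lemma pullback_radius_le_root_radius: "pullback_radius i \<le> root_radius"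
proof (induction i)
  case (Suc i)
  then show ?case
    using pullback_radius_Suc_le[of i] by linarith
qed simp

definition modulus :: "nat \<Rightarrow> real" where
  "modulus i = ln (pullback_radius i) - ln (pullback_radius (Suc i))"

lemma modulus_Suc_bounds: "2 * modulus (Suc i) \<le> modulus i" "modulus i \<le> (real d - 1) * modulus (Suc i)"
proof -
  define a where "a = pullback_radius (Suc (Suc i))"
  define b where "b = pullback_radius (Suc i)"
  have ab: "0 < a" "a \<le> b" "b \<le> root_radius" "0 < pullback_radius i"
    using pullback_radius_pos pullback_radius_Suc_le pullback_radius_le_root_radius
    by (auto simp: a_def b_def)
  have "radius_map a = b" "radius_map b = pullback_radius i"
    using radius_map_pullback_radius by (auto simp: a_def b_def)
  then have "(b / a) ^ 2 * b \<le> pullback_radius i" "pullback_radius i \<le> (b / a) ^ (d - 1) * b"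
    using radius_map_ratio_lower[OF ab(1,2)] radius_map_ratio_upper[OF ab(1-3)] by simp_all
  then have "ln ((b / a) ^ 2 * b) \<le> ln (pullback_radius i)"
    "ln (pullback_radius i) \<le> ln ((b / a) ^ (d - 1) * b)"
    using ab by (auto intro!: ln_mono)
  then have "2 * ln (b / a) + ln b \<le> ln (pullback_radius i)"
    "ln (pullback_radius i) \<le> real (d - 1) * ln (b / a) + ln b"
    using ab by (simp_all add: ln_mult ln_realpow)
  moreover have "modulus i = ln (pullback_radius i) - ln b" "modulus (Suc i) = ln (b / a)"
    using ab by (simp_all add: modulus_def a_def b_def ln_div)
  ultimately show "2 * modulus (Suc i) \<le> modulus i" "modulus i \<le> (real d - 1) * modulus (Suc i)"
    using d_ge_3 by (simp_all add: of_nat_diff)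
qed

lemma modulus_0_bounds: "ln root_radius \<le> modulus 0" "modulus 0 \<le> (real d - 1) * ln root_radius / 2"
proof -
  define r where "r = pullback_radius 1"
  have r: "0 < r" "r \<le> 1"
    using pullback_radius_pos pullback_radius_1_le_1 by (auto simp: r_def)
  then show "ln root_radius \<le> modulus 0"
    by (simp add: modulus_def r_def)
  have "r \<le> root_radius" "radius_map r = root_radius"
    using pullback_radius_le_root_radius[of 1] radius_map_pullback_radius[of 0] by (simp_all add: r_def)
  then have "root_radius \<le> r * r * root_radius ^ (d - 2)"
    using radius_map_le_of_le_root_radius[of r] r by simp
  then have "ln root_radius \<le> ln (r * r * root_radius ^ (d - 2))"
    using root_radius_gt_1 by (intro ln_mono) auto
  then have "ln root_radius \<le> 2 * ln r + real (d - 2) * ln root_radius"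
    using r root_radius_gt_1 by (simp add: ln_mult ln_realpow)
  then show "modulus 0 \<le> (real d - 1) * ln root_radius / 2"
    using d_ge_3 by (simp add: modulus_def r_def of_nat_diff field_simps)
qed

lemma modulus_bounds:
  "ln root_radius / (real d - 1) ^ i \<le> modulus i \<and> modulus i \<le> (real d - 1) * ln root_radius / 2 ^ (i + 1)"
proof (induction i)
  case 0
  then show ?case
    using modulus_0_bounds by simp
next
  case (Suc i)
  have "real d - 1 > 0"
    using d_ge_3 by simp
  have "ln root_radius / (real d - 1) ^ Suc i = (ln root_radius / (real d - 1) ^ i) / (real d - 1)"
    by simp
  also have "\<dots> \<le> modulus i / (real d - 1)"
    using Suc \<open>real d - 1 > 0\<close> by (intro divide_right_mono) auto
  also have "\<dots> \<le> modulus (Suc i)"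
    using modulus_Suc_bounds(2)[of i] \<open>real d - 1 > 0\<close> by (simp add: pos_divide_le_eq mult.commute)
  finally show ?case
    using Suc modulus_Suc_bounds(1)[of i] by simp
qed

lemma annulus_moduli_bounds:
  "(\<forall>i\<ge>1.
      splitting_radius w d F / (real d - 1) ^ i \<le> annulus_mod (B_radius w d F i) (B_radius w d F (i + 1))
    \<and> annulus_mod (B_radius w d F i) (B_radius w d F (i + 1)) \<le> (real d - 1) * splitting_radius w d F / 2 ^ (i + 1))
  \<and> splitting_radius w d F \<le> annulus_mod (exp (splitting_radius w d F)) (B_radius w d F 1)
  \<and> annulus_mod (exp (splitting_radius w d F)) (B_radius w d F 1) \<le> (real d - 1) * splitting_radius w d F / 2"
proof -
  have "annulus_mod (B_radius w d F i) (B_radius w d F (i + 1)) = modulus i" if "i \<ge> 1" for i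
    using B_radius_eq_pullback_radius that by (simp add: annulus_mod_def hsia_diag_def modulus_def)
  moreover have "annulus_mod (exp (splitting_radius w d F)) (B_radius w d F 1) = modulus 0"
    using B_radius_eq_pullback_radius[of 1] splitting_radius_eq root_radius_gt_1
    by (simp add: annulus_mod_def hsia_diag_def modulus_def)
  ultimately show ?thesis
    using modulus_bounds modulus_0_bounds by (simp add: splitting_radius_eq)
qed

end

lemma monic_poly_splits:
  fixes p :: "'a::field poly"
  assumes alg_closed: "alg_closed_field TYPE('a)" and "lead_coeff p = 1"
  shows "\<exists>es. length es = degree p \<and> p = prod_list (map (\<lambda>e. [:-e, 1:]) es)"
  using assms(2)
proof (induction "degree p" arbitrary: p)
  case 0
  then have "p = 1"
    by (metis coeff_pCons_0 degree_0_id one_pCons)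
  then show ?case
    by (intro exI[of _ "[]"]) simp
next
  case (Suc n)
  then obtain z where "poly p z = 0"
    using alg_closed unfolding alg_closed_field_def by (metis le_add1 plus_1_eq_Suc)
  then obtain q where q: "p = [:-z, 1:] * q"
    using poly_eq_0_iff_dvd by (metis dvdE)
  with Suc.prems have "q \<noteq> 0"
    by auto
  have "degree p = degree [:-z, 1:] + degree q"
    unfolding q by (rule degree_mult_eq) (use \<open>q \<noteq> 0\<close> in auto)
  moreover have "lead_coeff p = lead_coeff [:-z, 1:] * lead_coeff q"
    unfolding q by (rule lead_coeff_mult)
  ultimately have "degree q = n" "lead_coeff q = 1"
    using Suc.hyps(2) Suc.prems by simp_all
  then obtain es where "length es = n" "q = prod_list (map (\<lambda>e. [:-e, 1:]) es)"
    using Suc.hyps(1) by metis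
  then show ?case
    using q Suc.hyps(2) by (intro exI[of _ "z # es"]) simp
qed

lemma poly_prod_linear_factors:
  fixes z :: "'a::field"
  shows "poly (prod_list (map (\<lambda>e. [:-e, 1:]) es)) z = prod_list (map (\<lambda>e. z - e) es)"
  by (induction es) (auto simp: algebra_simps)

lemma superattracting_factorization:
  fixes P :: "'a::field poly"
  assumes alg_closed: "alg_closed_field TYPE('a)"
    and monic: "lead_coeff P = 1" and "poly P 0 = 0" "coeff P 1 = 0"
  shows "\<exists>cs. length cs = degree P - 2 \<and> P = [:0, 1:] * [:0, 1:] * prod_list (map (\<lambda>e. [:-e, 1:]) cs)"
proof -
  obtain Q where Q: "P = [:0, 1:] * Q"
    using \<open>poly P 0 = 0\<close> poly_eq_0_iff_dvd[of P 0] by (auto elim: dvdE)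
  moreover have "poly Q 0 = 0"
    using \<open>coeff P 1 = 0\<close> by (simp add: Q poly_0_coeff_0)
  ultimately obtain G where PG: "P = [:0, 1:] * [:0, 1:] * G"
    using poly_eq_0_iff_dvd[of Q 0] by (auto simp: mult.assoc elim: dvdE)
  have "lead_coeff G = 1"
    using monic unfolding PG lead_coeff_mult by simp
  then have "G \<noteq> 0"
    by auto
  then have "degree P = degree G + 2"
    unfolding PG by (simp add: degree_mult_eq del: mult_pCons_left)
  moreover obtain cs where "length cs = degree G" "G = prod_list (map (\<lambda>e. [:-e, 1:]) cs)"
    using monic_poly_splits[OF alg_closed \<open>lead_coeff G = 1\<close>] by blast
  ultimately show ?thesis
    using PG by (intro exI[of _ cs]) simp
qed

lemma monic_poly_minus_const_splits:
  fixes P :: "'a::field poly"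
  assumes alg_closed: "alg_closed_field TYPE('a)" and "lead_coeff P = 1" "degree P \<noteq> 0"
  shows "\<exists>es. \<forall>z. poly P z - y = prod_list (map (\<lambda>e. z - e) es)"
proof -
  have "degree (P + [:-y:]) = degree P"
    using assms(3) by (subst degree_add_eq_left) auto
  then have "lead_coeff (P + [:-y:]) = 1"
    using assms(2,3) by (cases "degree P") auto
  then obtain es where es: "P + [:-y:] = prod_list (map (\<lambda>e. [:-e, 1:]) es)"
    using monic_poly_splits[OF alg_closed] by blast
  have "poly P z - y = prod_list (map (\<lambda>e. z - e) es)" for z
    using arg_cong[OF es, of "\<lambda>p. poly p z"] by (simp add: poly_prod_linear_factors)
  then show ?thesis
    by blast
qed

context nonarch_value
begin

definition integral_poly :: "'a poly \<Rightarrow> bool" where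
  "integral_poly p \<longleftrightarrow> (\<forall>j. w (coeff p j) \<le> 1)"

lemma integral_poly_mult: "integral_poly p \<Longrightarrow> integral_poly q \<Longrightarrow> integral_poly (p * q)"
  unfolding integral_poly_def coeff_mult
  by (auto intro!: w_sum_le mult_le_one simp: w_mult)

lemma integral_poly_linear_factors:
  assumes "\<forall>c\<in>set cs. w c \<le> 1"
  shows "integral_poly (prod_list (map (\<lambda>e. [:-e, 1:]) cs))"
  using assms
proof (induction cs)
  case (Cons c cs)
  have "integral_poly [:-c, 1:]"
    using Cons.prems by (auto simp: integral_poly_def coeff_pCons split: nat.split)
  then show ?case
    using Cons by (simp add: integral_poly_mult del: mult_pCons_left)
qed (simp add: integral_poly_def coeff_1)

lemma superattracting_poly_of_poly:
  fixes P :: "'a poly"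
  assumes alg_closed: "alg_closed_field TYPE('a)" and nontrivial: "\<exists>x. w x \<noteq> 0 \<and> w x \<noteq> 1"
    and primes: "\<And>p. prime p \<Longrightarrow> p \<le> d \<Longrightarrow> w (of_nat p) = 1"
    and "degree P = d" "lead_coeff P = 1" "poly P 0 = 0" "coeff P 1 = 0"
    and bad_reduction: "\<exists>j. w (coeff P j) > 1"
  shows "\<exists>cs. superattracting_poly w d cs (poly P)"
proof -
  obtain cs where cs: "length cs = d - 2"
    and P: "P = [:0, 1:] * [:0, 1:] * prod_list (map (\<lambda>e. [:-e, 1:]) cs)"
    using superattracting_factorization[OF alg_closed] assms by blast
  have "\<exists>c\<in>set cs. w c > 1"
  proof (rule ccontr)
    assume "\<not> ?thesis"
    then have "integral_poly P"
      unfolding P by (intro integral_poly_mult integral_poly_linear_factors)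
        (auto simp: integral_poly_def coeff_pCons split: nat.split)
    then show False
      using bad_reduction by (auto simp: integral_poly_def not_le[symmetric])
  qed
  moreover from this have "degree P \<noteq> 0"
    using cs assms(4) by (cases cs) auto
  ultimately show ?thesis
    using cs w_values_dense[OF alg_closed nontrivial] w_of_nat_eq_1[OF primes]
      monic_poly_minus_const_splits[OF alg_closed \<open>lead_coeff P = 1\<close>]
    by (intro exI[of _ cs]) (unfold_locales, auto simp: P poly_prod_linear_factors algebra_simps)
qed

end

lemma valued_embedding_zero: "valued_embedding v w \<sigma> \<Longrightarrow> \<sigma> 0 = 0"
  unfolding valued_embedding_def by (metis add_cancel_right_right add_0)

lemma valued_embedding_of_nat: "valued_embedding v w \<sigma> \<Longrightarrow> \<sigma> (of_nat n) = of_nat n"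
  by (induction n) (auto simp: valued_embedding_zero, auto simp: valued_embedding_def)

lemma valued_embedding_nonzero:
  assumes "valued_embedding v w \<sigma>" "x \<noteq> 0"
  shows "\<sigma> x \<noteq> 0"
proof
  assume "\<sigma> x = 0"
  then have "\<sigma> (x * inverse x) = 0"
    using assms(1) unfolding valued_embedding_def by simp
  then show False
    using assms unfolding valued_embedding_def by simp
qed

lemma valued_embedding_map_poly:
  assumes "valued_embedding v w \<sigma>"
  shows "coeff (map_poly \<sigma> f) j = \<sigma> (coeff f j)" and "degree (map_poly \<sigma> f) = degree f"
    and "w (coeff (map_poly \<sigma> f) j) = v (coeff f j)"
proof -
  show coeff: "coeff (map_poly \<sigma> f) j = \<sigma> (coeff f j)" for j
    by (rule coeff_map_poly) (rule valued_embedding_zero[OF assms])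
  show "degree (map_poly \<sigma> f) = degree f"
    using valued_embedding_nonzero[OF assms] by (subst degree_map_poly) auto
  show "w (coeff (map_poly \<sigma> f) j) = v (coeff f j)"
    using assms by (simp add: coeff valued_embedding_def)
qed

theorem mainTheorem9:
  fixes v :: "'a::field_char_0 \<Rightarrow> real" and f :: "'a poly" and d :: nat
    and w :: "'b::field \<Rightarrow> real" and \<sigma> :: "'a \<Rightarrow> 'b"
  assumes "admissible_place v"
    and "not_above_small_primes v d"
    and "d \<ge> 3" and "degree f = d" and "lead_coeff f = 1"
    and "poly f 0 = 0" and "poly (pderiv f) 0 = 0"
    and "\<exists>j. v (coeff f j) > 1"
    and "alg_closed_field TYPE('b)" and "nonarch_abs w" and "complete_wrt w"
    and "valued_embedding v w \<sigma>"
  shows "(\<forall>i\<ge>1.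
            splitting_radius w d (poly (map_poly \<sigma> f)) / (real d - 1) ^ i
              \<le> annulus_mod (B_radius w d (poly (map_poly \<sigma> f)) i)
                            (B_radius w d (poly (map_poly \<sigma> f)) (i + 1))
          \<and> annulus_mod (B_radius w d (poly (map_poly \<sigma> f)) i)
                            (B_radius w d (poly (map_poly \<sigma> f)) (i + 1))
              \<le> (real d - 1) * splitting_radius w d (poly (map_poly \<sigma> f)) / 2 ^ (i + 1))
       \<and> splitting_radius w d (poly (map_poly \<sigma> f))
           \<le> annulus_mod (exp (splitting_radius w d (poly (map_poly \<sigma> f))))
                         (B_radius w d (poly (map_poly \<sigma> f)) 1)
       \<and> annulus_mod (exp (splitting_radius w d (poly (map_poly \<sigma> f))))
                         (B_radius w d (poly (map_poly \<sigma> f)) 1)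
           \<le> (real d - 1) * splitting_radius w d (poly (map_poly \<sigma> f)) / 2"
proof -
  interpret nonarch_value w
    by unfold_locales fact
  define P where "P = map_poly \<sigma> f"
  note P_coeff = valued_embedding_map_poly[OF \<open>valued_embedding v w \<sigma>\<close>, of f, folded P_def]
  have place: "nonarch_place v" and w_\<sigma>: "\<And>x. w (\<sigma> x) = v x"
    using assms(1,12) by (auto simp: admissible_place_def valued_embedding_def)
  have "\<exists>x. w x \<noteq> 0 \<and> w x \<noteq> 1"
    using place w_\<sigma> unfolding nonarch_place_def by metis
  moreover have "w (of_nat p) = 1" if "prime p" "p \<le> d" for p
    using assms(2) that w_\<sigma>[of "of_nat p"] valued_embedding_of_nat[OF assms(12)]
    unfolding not_above_small_primes_def by simp
  moreover have "poly P 0 = 0" "coeff P 1 = 0"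
    using assms(6,7) P_coeff(1)[of 0] P_coeff(1)[of 1] valued_embedding_zero[OF assms(12)]
    by (simp_all add: poly_0_coeff_0 coeff_pderiv)
  moreover have "degree P = d" "lead_coeff P = 1" "\<exists>j. w (coeff P j) > 1"
    using assms(4,5,8,12) P_coeff by (auto simp: valued_embedding_def)
  ultimately obtain cs where "superattracting_poly w d cs (poly P)"
    using superattracting_poly_of_poly[OF assms(9)] by metis
  then show ?thesis
    unfolding P_def by (rule superattracting_poly.annulus_moduli_bounds)
qed

end
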